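(* Let $A=[a_{ij}]\in\mathcal{M}_3(\mathbb{H})$ be strictly upper triangular and suppose that the two quaternions $a_{12}$ and $a_{13}a_{23}^*$ are linearly independent over $\mathbb{R}$. Let $M=\max\{\pi_{\mathbb{R}}(\mathbf{x}^*A\mathbf{x}):\mathbf{x}\in\mathbb{S}_{\mathbb{H}^3}\}$ and let $\mathbf{y}=(y_1,y_2,y_3)\in\mathbb{S}_{\mathbb{H}^3}$ satisfy $\pi_{\mathbb{R}}(\mathbf{y}^*A\mathbf{y})=M$. Then $$y_1^*(a_{12}y_2+a_{13}y_3),\quad y_2^*(a_{12}^*y_1+a_{23}y_3),\quad (y_1^*a_{13}+y_2^*a_{23})y_3$$ all belong to $\mathbb{R}\setminus\{0\}$.
   Context: $\mathbb{H}$ denotes the real quaternions with conjugation $q\mapsto q^*$; for $q=a_0+a_1i+a_2j+a_3k$, $\pi_{\mathbb{R}}(q)=a_0$ is its real part. $\mathbb{S}_{\mathbb{H}^3}=\{\mathbf{x}\in\mathbb{H}^3:\mathbf{x}^*\mathbf{x}=1\}$, where $\mathbf{x}^*$ is the conjugate transpose. *)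

theory Defs
  imports "HOL-Analysis.Analysis"
begin

datatype quat = Quat (qRe: real) (qI: real) (qJ: real) (qK: real)

lemma quat_eqI: "qRe a = qRe b \<Longrightarrow> qI a = qI b \<Longrightarrow> qJ a = qJ b \<Longrightarrow> qK a = qK b \<Longrightarrow> a = b"
  by (cases a; cases b) auto

instantiation quat :: real_algebra_1
begin
definition "0 = Quat 0 0 0 0"
definition "1 = Quat 1 0 0 0"
definition "a + b = Quat (qRe a + qRe b) (qI a + qI b) (qJ a + qJ b) (qK a + qK b)"
definition "- a = Quat (- qRe a) (- qI a) (- qJ a) (- qK a)"
definition "a - b = Quat (qRe a - qRe b) (qI a - qI b) (qJ a - qJ b) (qK a - qK b)"
definition "scaleR r a = Quat (r * qRe a) (r * qI a) (r * qJ a) (r * qK a)"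
definition "a * b = Quat
   (qRe a * qRe b - qI a * qI b - qJ a * qJ b - qK a * qK b)
   (qRe a * qI b + qI a * qRe b + qJ a * qK b - qK a * qJ b)
   (qRe a * qJ b - qI a * qK b + qJ a * qRe b + qK a * qI b)
   (qRe a * qK b + qI a * qJ b - qJ a * qI b + qK a * qRe b)"
instance
  by standard (auto intro!: quat_eqI simp: zero_quat_def one_quat_def plus_quat_def
      uminus_quat_def minus_quat_def scaleR_quat_def times_quat_def algebra_simps)
end

definition qcnj :: "quat \<Rightarrow> quat" where
  "qcnj a = Quat (qRe a) (- qI a) (- qJ a) (- qK a)"

text \<open>Real part \<pi>_R is qRe.  Vectors of H^3 are functions nat \<Rightarrow> quat on
  indices {1..3}; 3x3 matrices are functions nat \<Rightarrow> nat \<Rightarrow> quat on {1..3}x{1..3}.\<close>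

definition unit_sphere_H3 :: "(nat \<Rightarrow> quat) set" where
  "unit_sphere_H3 = {x. (\<Sum>i\<in>{1..3::nat}. qcnj (x i) * x i) = 1}"

definition qform :: "(nat \<Rightarrow> nat \<Rightarrow> quat) \<Rightarrow> (nat \<Rightarrow> quat) \<Rightarrow> quat" where
  "qform A x = (\<Sum>i\<in>{1..3::nat}. \<Sum>j\<in>{1..3::nat}. qcnj (x i) * A i j * x j)"

end

theory Submission imports Defs begin

text \<open>Write the real part of the form as
  F(x) = Re(x1* a x2 + x1* b x3 + x2* c x3) with a = a12, b = a13, c = a23. Since F is a
  quadratic form, maximality of y on the sphere means F(w) \<le> M |w|^2 for all w, and expanding
  F(y + t h) \<le> M |y + t h|^2 in t forces the Lagrange equations
  a y2 + b y3 = 2M y1,  a* y1 + c y3 = 2M y2,  b* y1 + c* y2 = 2M y3.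
  Hence the three quaternions of the claim are 2M |yi|^2. Testing F at (a, 1, 0) gives M > 0,
  and if some yi vanished, the equations would produce a nontrivial real relation between
  a and b c*.\<close>

definition qnorm2 :: "quat \<Rightarrow> real" where
  "qnorm2 a = qRe a ^ 2 + qI a ^ 2 + qJ a ^ 2 + qK a ^ 2"

lemma qnorm2_nonneg: "qnorm2 a \<ge> 0"
  unfolding qnorm2_def by simp

lemma qnorm2_eq_0_iff: "qnorm2 a = 0 \<longleftrightarrow> a = 0"
proof
  assume "qnorm2 a = 0"
  then have "qRe a = 0 \<and> qI a = 0 \<and> qJ a = 0 \<and> qK a = 0"
    unfolding qnorm2_def by (smt (verit) zero_le_power2 power_eq_0_iff zero_less_numeral)
  then show "a = 0" by (auto intro: quat_eqI simp: zero_quat_def)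
qed (simp add: qnorm2_def zero_quat_def)

lemma qnorm2_pos: "a \<noteq> 0 \<Longrightarrow> qnorm2 a > 0"
  using qnorm2_nonneg[of a] qnorm2_eq_0_iff[of a] by linarith

lemma qnorm2_scaleR: "qnorm2 (r *\<^sub>R a) = r\<^sup>2 * qnorm2 a"
  by (simp add: qnorm2_def scaleR_quat_def power2_eq_square algebra_simps)

lemma qnorm2_add_scaleR:
  "qnorm2 (y + t *\<^sub>R h) = qnorm2 y + t * (2 * qRe (qcnj h * y)) + t\<^sup>2 * qnorm2 h"
  by (simp add: qnorm2_def qcnj_def times_quat_def plus_quat_def scaleR_quat_def
      power2_eq_square algebra_simps)

lemma of_real_quat: "(of_real r :: quat) = Quat r 0 0 0"
  by (simp add: of_real_def scaleR_quat_def one_quat_def)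

lemma qcnj_mult_self: "qcnj a * a = of_real (qnorm2 a)"
  by (rule quat_eqI) (simp_all add: of_real_quat qcnj_def times_quat_def qnorm2_def
      power2_eq_square algebra_simps)

lemma mult_qcnj_self: "a * qcnj a = of_real (qnorm2 a)"
  by (rule quat_eqI) (simp_all add: of_real_quat qcnj_def times_quat_def qnorm2_def
      power2_eq_square algebra_simps)

lemma qRe_qcnj_mult_self: "qRe (qcnj a * a) = qnorm2 a"
  by (simp add: qcnj_mult_self of_real_quat)

lemma qcnj_mult_scaleR_self: "qcnj a * (r *\<^sub>R a) = of_real (r * qnorm2 a)"
  by (simp add: qcnj_mult_self of_real_def)

lemma qcnj_mult: "qcnj (a * b) = qcnj b * qcnj a"
  by (rule quat_eqI) (simp_all add: qcnj_def times_quat_def algebra_simps)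

lemma qcnj_add: "qcnj (a + b) = qcnj a + qcnj b"
  by (rule quat_eqI) (simp_all add: qcnj_def plus_quat_def)

lemma qcnj_scaleR: "qcnj (r *\<^sub>R a) = r *\<^sub>R qcnj a"
  by (rule quat_eqI) (simp_all add: qcnj_def scaleR_quat_def)

lemma qcnj_qcnj: "qcnj (qcnj a) = a"
  by (rule quat_eqI) (simp_all add: qcnj_def)

lemma qcnj_zero: "qcnj 0 = 0"
  by (rule quat_eqI) (simp_all add: qcnj_def zero_quat_def)

lemma qRe_add: "qRe (a + b) = qRe a + qRe b"
  by (simp add: plus_quat_def)

lemma qRe_scaleR: "qRe (r *\<^sub>R a) = r * qRe a"
  by (simp add: scaleR_quat_def)

lemma quat_mult_eq_0_left:
  fixes p y :: quat
  assumes "p * y = 0" "y \<noteq> 0"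
  shows "p = 0"
proof -
  have "qnorm2 y *\<^sub>R p = p * y * qcnj y"
    by (simp add: mult.assoc mult_qcnj_self of_real_def)
  also have "\<dots> = 0" using assms(1) by simp
  finally show ?thesis using assms(2) qnorm2_eq_0_iff by auto
qed

lemma linear_plus_quadratic_le_0_imp:
  fixes a b :: real
  assumes "\<forall>t. t * a + t\<^sup>2 * b \<le> 0"
  shows "a = 0"
proof -
  define c where "c = \<bar>b\<bar> + 1"
  have c: "c > 0" "c + b > 0" unfolding c_def by linarith+
  have "(a / c * a + (a / c)\<^sup>2 * b) * c\<^sup>2 = a\<^sup>2 * (c + b)"
    using c by (simp add: field_simps power2_eq_square)
  moreover have "(a / c * a + (a / c)\<^sup>2 * b) * c\<^sup>2 \<le> 0"
    using assms[rule_format, of "a / c"] by (rule mult_nonpos_nonneg) simp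
  ultimately have "a\<^sup>2 \<le> 0" using c by (simp add: mult_le_0_iff)
  then show ?thesis by simp
qed

definition tri_form :: "quat \<Rightarrow> quat \<Rightarrow> quat \<Rightarrow> quat \<Rightarrow> quat \<Rightarrow> quat \<Rightarrow> real" where
  "tri_form a b c x1 x2 x3 = qRe (qcnj x1 * a * x2 + qcnj x1 * b * x3 + qcnj x2 * c * x3)"

lemma tri_form_scaleR:
  "tri_form a b c (k *\<^sub>R x1) (k *\<^sub>R x2) (k *\<^sub>R x3) = k\<^sup>2 * tri_form a b c x1 x2 x3"
  by (simp add: tri_form_def qcnj_scaleR qRe_add qRe_scaleR power2_eq_square algebra_simps)

lemma qRe_qcnj_mult_add_scaleR:
  "qRe (qcnj (y1 + t *\<^sub>R h1) * a * (y2 + t *\<^sub>R h2)) =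
   qRe (qcnj y1 * a * y2) + t * (qRe (qcnj h1 * (a * y2)) + qRe (qcnj h2 * (qcnj a * y1)))
   + t\<^sup>2 * qRe (qcnj h1 * a * h2)"
  by (simp add: qcnj_def times_quat_def plus_quat_def scaleR_quat_def power2_eq_square
      algebra_simps)

lemma tri_form_add_scaleR:
  "tri_form a b c (y1 + t *\<^sub>R h1) (y2 + t *\<^sub>R h2) (y3 + t *\<^sub>R h3) =
   tri_form a b c y1 y2 y3
   + t * (qRe (qcnj h1 * (a * y2 + b * y3)) + qRe (qcnj h2 * (qcnj a * y1 + c * y3))
          + qRe (qcnj h3 * (qcnj b * y1 + qcnj c * y2)))
   + t\<^sup>2 * tri_form a b c h1 h2 h3"
  unfolding tri_form_def qRe_add qRe_qcnj_mult_add_scaleR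
  by (simp add: qRe_add algebra_simps)

definition quat_of_tuple :: "real \<times> real \<times> real \<times> real \<Rightarrow> quat" where
  "quat_of_tuple p = Quat (fst p) (fst (snd p)) (fst (snd (snd p))) (snd (snd (snd p)))"

lemma norm_quat_tuples_sq:
  fixes p :: "(real \<times> real \<times> real \<times> real) \<times> (real \<times> real \<times> real \<times> real) \<times> (real \<times> real \<times> real \<times> real)"
  shows "(norm p)\<^sup>2 = qnorm2 (quat_of_tuple (fst p)) + qnorm2 (quat_of_tuple (fst (snd p)))
    + qnorm2 (quat_of_tuple (snd (snd p)))"
  by (simp add: norm_prod_def quat_of_tuple_def qnorm2_def algebra_simps)

lemma tri_form_attains_max:
  "\<exists>u1 u2 u3. qnorm2 u1 + qnorm2 u2 + qnorm2 u3 = 1 \<and>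
     (\<forall>x1 x2 x3. qnorm2 x1 + qnorm2 x2 + qnorm2 x3 = 1 \<longrightarrow>
        tri_form a b c x1 x2 x3 \<le> tri_form a b c u1 u2 u3)"
proof -
  let ?K = "sphere (0 :: (real \<times> real \<times> real \<times> real) \<times> (real \<times> real \<times> real \<times> real)
                          \<times> (real \<times> real \<times> real \<times> real)) 1"
  let ?q = quat_of_tuple
  let ?F = "\<lambda>p. tri_form a b c (?q (fst p)) (?q (fst (snd p))) (?q (snd (snd p)))"
  have "continuous_on ?K ?F"
    unfolding tri_form_def quat_of_tuple_def qcnj_def times_quat_def plus_quat_def
    by (simp, intro continuous_intros)
  moreover have "?K \<noteq> {}" by simp
  ultimately obtain p where p: "p \<in> ?K" and p_max: "\<forall>r\<in>?K. ?F r \<le> ?F p"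
    using continuous_attains_sup[OF compact_sphere] by blast
  have sphere_iff:
    "r \<in> ?K \<longleftrightarrow> qnorm2 (?q (fst r)) + qnorm2 (?q (fst (snd r))) + qnorm2 (?q (snd (snd r))) = 1"
    for r
  proof -
    have "r \<in> ?K \<longleftrightarrow> (norm r)\<^sup>2 = 1"
      using power2_eq_1_iff[of "norm r"] norm_ge_zero[of r] by (auto simp: dist_norm)
    then show ?thesis by (simp add: norm_quat_tuples_sq)
  qed
  define tuple :: "quat \<Rightarrow> real \<times> real \<times> real \<times> real" where
    "tuple x = (qRe x, qI x, qJ x, qK x)" for x
  have q_tuple: "?q (tuple x) = x" for x
    by (cases x) (simp add: tuple_def quat_of_tuple_def)
  show ?thesis
  proof (intro exI conjI allI impI)
    show "qnorm2 (?q (fst p)) + qnorm2 (?q (fst (snd p))) + qnorm2 (?q (snd (snd p))) = 1"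
      using p sphere_iff by blast
    fix x1 x2 x3 assume "qnorm2 x1 + qnorm2 x2 + qnorm2 x3 = 1"
    then have "(tuple x1, tuple x2, tuple x3) \<in> ?K"
      using sphere_iff[of "(tuple x1, tuple x2, tuple x3)"] by (simp add: q_tuple)
    then show "tri_form a b c x1 x2 x3 \<le> ?F p"
      using p_max by (metis fst_conv snd_conv q_tuple)
  qed
qed

lemma tri_form_le_max_scaled:
  assumes max: "\<forall>x1 x2 x3. qnorm2 x1 + qnorm2 x2 + qnorm2 x3 = 1 \<longrightarrow> tri_form a b c x1 x2 x3 \<le> M"
  shows "tri_form a b c w1 w2 w3 \<le> M * (qnorm2 w1 + qnorm2 w2 + qnorm2 w3)"
proof -
  define n where "n = qnorm2 w1 + qnorm2 w2 + qnorm2 w3"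
  show ?thesis
  proof (cases "n = 0")
    case True
    then have "w1 = 0" "w2 = 0" "w3 = 0"
      using qnorm2_nonneg[of w1] qnorm2_nonneg[of w2] qnorm2_nonneg[of w3]
      unfolding n_def qnorm2_eq_0_iff[symmetric] by linarith+
    moreover have "qnorm2 0 = 0" "qRe 0 = 0" by (simp_all add: qnorm2_eq_0_iff zero_quat_def)
    ultimately show ?thesis by (simp add: tri_form_def qcnj_zero)
  next
    case False
    then have n: "n > 0"
      using qnorm2_nonneg[of w1] qnorm2_nonneg[of w2] qnorm2_nonneg[of w3] unfolding n_def by linarith
    define k where "k = 1 / sqrt n"
    have k2: "k\<^sup>2 = 1 / n" using n by (simp add: k_def power_divide)
    have "qnorm2 (k *\<^sub>R w1) + qnorm2 (k *\<^sub>R w2) + qnorm2 (k *\<^sub>R w3) = 1"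
      using n by (simp add: qnorm2_scaleR k2 n_def add_divide_distrib[symmetric])
    then have "k\<^sup>2 * tri_form a b c w1 w2 w3 \<le> M"
      using max tri_form_scaleR by metis
    then show ?thesis
      using n k2 by (simp add: n_def[symmetric] pos_divide_le_eq mult.commute)
  qed
qed

text \<open>The perturbation y + t h with h the defect of the Lagrange equations gives
  F(y + t h) - M |y + t h|^2 = 2t |h|^2 + O(t^2), which is positive for small t > 0
  unless h = 0.\<close>

lemma tri_form_stationary:
  assumes bound: "\<And>w1 w2 w3. tri_form a b c w1 w2 w3 \<le> M * (qnorm2 w1 + qnorm2 w2 + qnorm2 w3)"
    and y_norm: "qnorm2 y1 + qnorm2 y2 + qnorm2 y3 = 1"
    and y_max: "tri_form a b c y1 y2 y3 = M"
  shows "a * y2 + b * y3 = (2*M) *\<^sub>R y1"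
    and "qcnj a * y1 + c * y3 = (2*M) *\<^sub>R y2"
    and "qcnj b * y1 + qcnj c * y2 = (2*M) *\<^sub>R y3"
proof -
  define h1 where "h1 = a * y2 + b * y3 - (2*M) *\<^sub>R y1"
  define h2 where "h2 = qcnj a * y1 + c * y3 - (2*M) *\<^sub>R y2"
  define h3 where "h3 = qcnj b * y1 + qcnj c * y2 - (2*M) *\<^sub>R y3"
  have e1: "a * y2 + b * y3 = h1 + (2*M) *\<^sub>R y1" by (simp add: h1_def)
  have e2: "qcnj a * y1 + c * y3 = h2 + (2*M) *\<^sub>R y2" by (simp add: h2_def)
  have e3: "qcnj b * y1 + qcnj c * y2 = h3 + (2*M) *\<^sub>R y3" by (simp add: h3_def)
  have M_split: "M * qnorm2 y1 + (M * qnorm2 y2 + M * qnorm2 y3) = M"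
    using y_norm by (metis distrib_left mult.right_neutral add.assoc)
  let ?N = "qnorm2 h1 + qnorm2 h2 + qnorm2 h3"
  have "\<forall>t. t * ?N + t\<^sup>2 * (tri_form a b c h1 h2 h3 - M * ?N) \<le> 0"
  proof
    fix t :: real
    have "tri_form a b c (y1 + t *\<^sub>R h1) (y2 + t *\<^sub>R h2) (y3 + t *\<^sub>R h3)
        \<le> M * (qnorm2 (y1 + t *\<^sub>R h1) + qnorm2 (y2 + t *\<^sub>R h2) + qnorm2 (y3 + t *\<^sub>R h3))"
      by (rule bound)
    then show "t * ?N + t\<^sup>2 * (tri_form a b c h1 h2 h3 - M * ?N) \<le> 0"
      unfolding tri_form_add_scaleR qnorm2_add_scaleR e1 e2 e3 distrib_left qRe_add qRe_scaleR
        mult_scaleR_right qRe_qcnj_mult_self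
      using y_norm y_max by (simp add: algebra_simps) (insert M_split, linarith)
  qed
  then have "?N = 0" by (rule linear_plus_quadratic_le_0_imp)
  then have "h1 = 0" "h2 = 0" "h3 = 0"
    using qnorm2_nonneg[of h1] qnorm2_nonneg[of h2] qnorm2_nonneg[of h3]
    unfolding qnorm2_eq_0_iff[symmetric] by linarith+
  then show "a * y2 + b * y3 = (2*M) *\<^sub>R y1" "qcnj a * y1 + c * y3 = (2*M) *\<^sub>R y2"
      "qcnj b * y1 + qcnj c * y2 = (2*M) *\<^sub>R y3"
    using e1 e2 e3 by simp_all
qed

lemma tri_form_max_pos:
  assumes "\<And>w1 w2 w3. tri_form a b c w1 w2 w3 \<le> M * (qnorm2 w1 + qnorm2 w2 + qnorm2 w3)"
    and "a \<noteq> 0"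
  shows "M > 0"
proof -
  have "qnorm2 a = tri_form a b c a 1 0"
    by (simp add: tri_form_def qRe_qcnj_mult_self qcnj_zero qRe_add)
  also have "\<dots> \<le> M * (qnorm2 a + 1)"
    using assms(1)[of a 1 0] by (simp add: qnorm2_def one_quat_def zero_quat_def)
  finally show ?thesis
    using qnorm2_pos[OF assms(2)] by (smt (verit) mult_nonpos_nonneg)
qed

text \<open>In the next three lemmas l plays the role of 2M; each vanishing coordinate is turned
  into a real relation r a + s b c* = 0 by eliminating the remaining coordinates.\<close>

lemma stationary_first_nonzero:
  assumes e1: "a * y2 + b * y3 = l *\<^sub>R y1" and e2: "qcnj a * y1 + c * y3 = l *\<^sub>R y2"
    and indep: "\<forall>r s :: real. r *\<^sub>R a + s *\<^sub>R (b * qcnj c) = 0 \<longrightarrow> r = 0 \<and> s = 0"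
    and "l \<noteq> 0" and y_nonzero: "(y1, y2, y3) \<noteq> (0, 0, 0)"
  shows "y1 \<noteq> 0"
proof
  assume y1: "y1 = 0"
  have y3: "y3 \<noteq> 0"
  proof
    assume "y3 = 0"
    then have "y2 = 0" using e2 y1 \<open>l \<noteq> 0\<close> by simp
    then show False using y_nonzero y1 \<open>y3 = 0\<close> by simp
  qed
  have "(a * c + l *\<^sub>R b) * y3 = a * (c * y3) + l *\<^sub>R (b * y3)"
    by (simp add: algebra_simps)
  also have "\<dots> = l *\<^sub>R (a * y2 + b * y3)"
    using e2 y1 by (simp add: algebra_simps)
  also have "\<dots> = 0" using e1 y1 by simp
  finally have "a * c + l *\<^sub>R b = 0" using quat_mult_eq_0_left y3 by blast
  then have "(a * c + l *\<^sub>R b) * qcnj c = 0" by simp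
  then have "qnorm2 c *\<^sub>R a + l *\<^sub>R (b * qcnj c) = 0"
    by (simp add: algebra_simps mult_qcnj_self of_real_def)
  then show False using indep \<open>l \<noteq> 0\<close> by blast
qed

lemma stationary_second_nonzero:
  assumes e2: "qcnj a * y1 + c * y3 = l *\<^sub>R y2" and e3: "qcnj b * y1 + qcnj c * y2 = l *\<^sub>R y3"
    and indep: "\<forall>r s :: real. r *\<^sub>R a + s *\<^sub>R (b * qcnj c) = 0 \<longrightarrow> r = 0 \<and> s = 0"
    and "y1 \<noteq> 0"
  shows "y2 \<noteq> 0"
proof
  assume y2: "y2 = 0"
  have "(l *\<^sub>R qcnj a + c * qcnj b) * y1 = l *\<^sub>R (qcnj a * y1) + c * (qcnj b * y1)"
    by (simp add: algebra_simps)
  also have "\<dots> = l *\<^sub>R (qcnj a * y1 + c * y3)"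
    using e3 y2 by (simp add: algebra_simps)
  also have "\<dots> = 0" using e2 y2 by simp
  finally have "l *\<^sub>R qcnj a + c * qcnj b = 0"
    using quat_mult_eq_0_left \<open>y1 \<noteq> 0\<close> by blast
  then have "qcnj (l *\<^sub>R qcnj a + c * qcnj b) = 0" by (simp add: qcnj_zero)
  then have "l *\<^sub>R a + 1 *\<^sub>R (b * qcnj c) = 0"
    by (simp add: qcnj_add qcnj_mult qcnj_scaleR qcnj_qcnj)
  then show False using indep by fastforce
qed

lemma stationary_third_nonzero:
  assumes e1: "a * y2 + b * y3 = l *\<^sub>R y1" and e3: "qcnj b * y1 + qcnj c * y2 = l *\<^sub>R y3"
    and indep: "\<forall>r s :: real. r *\<^sub>R a + s *\<^sub>R (b * qcnj c) = 0 \<longrightarrow> r = 0 \<and> s = 0"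
    and "l \<noteq> 0" and "y2 \<noteq> 0"
  shows "y3 \<noteq> 0"
proof
  assume y3: "y3 = 0"
  have "(qcnj b * a + l *\<^sub>R qcnj c) * y2 = qcnj b * (a * y2) + l *\<^sub>R (qcnj c * y2)"
    by (simp add: algebra_simps)
  also have "\<dots> = l *\<^sub>R (qcnj b * y1 + qcnj c * y2)"
    using e1 y3 by (simp add: algebra_simps)
  also have "\<dots> = 0" using e3 y3 by simp
  finally have "qcnj b * a + l *\<^sub>R qcnj c = 0"
    using quat_mult_eq_0_left \<open>y2 \<noteq> 0\<close> by blast
  then have "b * (qcnj b * a + l *\<^sub>R qcnj c) = 0" by simp
  then have "qnorm2 b *\<^sub>R a + l *\<^sub>R (b * qcnj c) = 0"
    by (simp add: algebra_simps flip: mult.assoc) (simp add: mult_qcnj_self of_real_def)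
  then show False using indep \<open>l \<noteq> 0\<close> by blast
qed

lemma sum_1_3: "(\<Sum>i\<in>{1..3::nat}. f i) = f 1 + f 2 + f 3"
proof -
  have "{1..3::nat} = {1, 2, 3}" by auto
  then show ?thesis by (simp add: add.assoc)
qed

lemma unit_sphere_H3_iff: "x \<in> unit_sphere_H3 \<longleftrightarrow> qnorm2 (x 1) + qnorm2 (x 2) + qnorm2 (x 3) = 1"
proof -
  have "(\<Sum>i\<in>{1..3::nat}. qcnj (x i) * x i) = of_real (qnorm2 (x 1) + qnorm2 (x 2) + qnorm2 (x 3))"
    unfolding sum_1_3 by (simp add: qcnj_mult_self)
  then show ?thesis unfolding unit_sphere_H3_def by (simp del: of_real_add)
qed

lemma qRe_qform_upper_triangular:
  assumes "\<forall>i\<in>{1..3::nat}. \<forall>j\<in>{1..3::nat}. j \<le> i \<longrightarrow> A i j = 0"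
  shows "qRe (qform A x) = tri_form (A 1 2) (A 1 3) (A 2 3) (x 1) (x 2) (x 3)"
proof -
  have "A 1 1 = 0" "A 2 1 = 0" "A 2 2 = 0" "A 3 1 = 0" "A 3 2 = 0" "A 3 3 = 0"
    using assms by auto
  then show ?thesis unfolding qform_def tri_form_def sum_1_3 by (simp add: algebra_simps)
qed

lemma Greatest_qform_bound:
  assumes "\<forall>i\<in>{1..3::nat}. \<forall>j\<in>{1..3::nat}. j \<le> i \<longrightarrow> A i j = 0"
  shows "tri_form (A 1 2) (A 1 3) (A 2 3) w1 w2 w3
     \<le> (GREATEST m. m \<in> (\<lambda>x. qRe (qform A x)) ` unit_sphere_H3)
        * (qnorm2 w1 + qnorm2 w2 + qnorm2 w3)"
proof -
  let ?F = "tri_form (A 1 2) (A 1 3) (A 2 3)"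
  obtain u1 u2 u3 where u: "qnorm2 u1 + qnorm2 u2 + qnorm2 u3 = 1"
    and u_max: "\<forall>x1 x2 x3. qnorm2 x1 + qnorm2 x2 + qnorm2 x3 = 1 \<longrightarrow> ?F x1 x2 x3 \<le> ?F u1 u2 u3"
    using tri_form_attains_max by blast
  define u where "u = (\<lambda>i::nat. if i = 1 then u1 else if i = 2 then u2 else u3)"
  have "(GREATEST m. m \<in> (\<lambda>x. qRe (qform A x)) ` unit_sphere_H3) = ?F u1 u2 u3"
  proof (rule Greatest_equality)
    show "?F u1 u2 u3 \<in> (\<lambda>x. qRe (qform A x)) ` unit_sphere_H3"
      using u by (auto simp: qRe_qform_upper_triangular[OF assms] unit_sphere_H3_iff u_def
          intro!: image_eqI[of _ _ u])
    show "m \<le> ?F u1 u2 u3" if "m \<in> (\<lambda>x. qRe (qform A x)) ` unit_sphere_H3" for m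
      using that u_max by (auto simp: qRe_qform_upper_triangular[OF assms] unit_sphere_H3_iff)
  qed
  then show ?thesis using tri_form_le_max_scaled[OF u_max] by simp
qed

theorem lemma5p2:
  fixes A :: "nat \<Rightarrow> nat \<Rightarrow> quat" and y :: "nat \<Rightarrow> quat"
  assumes upper: "\<forall>i\<in>{1..3::nat}. \<forall>j\<in>{1..3::nat}. j \<le> i \<longrightarrow> A i j = 0"
    and indep: "\<forall>r s :: real. r *\<^sub>R A 1 2 + s *\<^sub>R (A 1 3 * qcnj (A 2 3)) = 0 \<longrightarrow> r = 0 \<and> s = 0"
    and y_sphere: "y \<in> unit_sphere_H3"
    and y_max: "qRe (qform A y) = (GREATEST m. m \<in> (\<lambda>x. qRe (qform A x)) ` unit_sphere_H3)"
  shows "qcnj (y 1) * (A 1 2 * y 2 + A 1 3 * y 3) \<in> \<real> - {0} \<and>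
         qcnj (y 2) * (qcnj (A 1 2) * y 1 + A 2 3 * y 3) \<in> \<real> - {0} \<and>
         (qcnj (y 1) * A 1 3 + qcnj (y 2) * A 2 3) * y 3 \<in> \<real> - {0}"
proof -
  define M where "M = (GREATEST m. m \<in> (\<lambda>x. qRe (qform A x)) ` unit_sphere_H3)"
  note bound = Greatest_qform_bound[OF upper, folded M_def]
  have y_norm: "qnorm2 (y 1) + qnorm2 (y 2) + qnorm2 (y 3) = 1"
    using y_sphere by (simp add: unit_sphere_H3_iff)
  have "tri_form (A 1 2) (A 1 3) (A 2 3) (y 1) (y 2) (y 3) = M"
    using y_max qRe_qform_upper_triangular[OF upper, of y] by (simp add: M_def)
  note e = tri_form_stationary[OF bound y_norm this]
  have "A 1 2 \<noteq> 0" using indep[rule_format, of 1 0] by auto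
  then have l: "2 * M \<noteq> 0" using tri_form_max_pos[OF bound] by simp
  have "qnorm2 0 = 0" by (simp add: qnorm2_eq_0_iff)
  then have "(y 1, y 2, y 3) \<noteq> (0, 0, 0)" using y_norm by auto
  then have y1: "y 1 \<noteq> 0" by (rule stationary_first_nonzero[OF e(1,2) indep l])
  then have y2: "y 2 \<noteq> 0" by (rule stationary_second_nonzero[OF e(2,3) indep])
  then have y3: "y 3 \<noteq> 0" by (rule stationary_third_nonzero[OF e(1,3) indep l])
  have in_Reals: "qcnj (y i) * ((2 * M) *\<^sub>R y i) \<in> \<real> - {0}" if "y i \<noteq> 0" for i
    unfolding qcnj_mult_scaleR_self using l qnorm2_pos[OF that] by (simp del: of_real_mult)
  have "qcnj (y 1) * A 1 3 + qcnj (y 2) * A 2 3 = qcnj (qcnj (A 1 3) * y 1 + qcnj (A 2 3) * y 2)"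
    by (simp add: qcnj_add qcnj_mult qcnj_qcnj)
  also have "\<dots> = (2 * M) *\<^sub>R qcnj (y 3)"
    using e(3) by (simp add: qcnj_scaleR)
  finally have e3: "(qcnj (y 1) * A 1 3 + qcnj (y 2) * A 2 3) * y 3 = qcnj (y 3) * ((2 * M) *\<^sub>R y 3)"
    by simp
  show ?thesis unfolding e(1,2) e3 by (intro conjI in_Reals y1 y2 y3)
qed

end
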